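(* Let $U$ be a nonempty open subset of $\mathbb{R}^d$ and let $(a_n)_{n\ge1}$ be a sequence of points of $U$ such that $\inf_\lambda\liminf_{j\to\infty}2^{-dj}\#\mathrm{M}((a_n)_{n\ge1};\lambda,j)>0$, the infimum over all nonempty dyadic cubes $\lambda\subseteq U$. Let $\mathcal{A}=\{a_n:n\ge1\}$ and define $H:\mathcal{A}\to(0,\infty)$ by $H(a)=(\min\{n\ge1:a=a_n\})^{1/d}$. Then $(\mathcal{A},H)$ is an optimal regular system in $U$.
   Context: Fix a norm $|\cdot|$ on $\mathbb{R}^d$, diameters taken with respect to it. Let $\mathcal{A}\subseteq\mathbb{R}^d$ be countably infinite and $H:\mathcal{A}\to(0,\infty)$. The pair $(\mathcal{A},H)$ is admissible if for every integer $m\ge1$ the set $\{a\in\mathcal{A}:|a|<m,\ H(a)\le m\}$ is finite. It is a regular system in an open set $U$ if it is admissible and there is $\kappa>0$ such that for every open ball $B\subseteq U$ there is $h_B>0$ such that for all $h>h_B$ there is $\mathcal{A}_{B,h}\subseteq\mathcal{A}\cap B$ with $\#\mathcal{A}_{B,h}\ge\kappa(\mathrm{diam}\,B)^dh^d$, $H(a)\le h$ for $a\in\mathcal{A}_{B,h}$, and $|a-a'|\ge1/h$ for distinct $a,a'\in\mathcal{A}_{B,h}$. It is an optimal system in $U$ if it is admissible and for every open ball $B$ there are $\kappa'_B,h'_B>0$ with $\#\{a\in\mathcal{A}\cap U\cap B:H(a)\le h\}\le\kappa'_Bh^d$ for $h>h'_B$. An optimal regular system is one that is both. A dyadic cube is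 $\lambda=2^{-j}(k+[0,1)^d)$, $j\in\mathbb{Z}$, $k\in\mathbb{Z}^d$, of generation $\langle\lambda\rangle=j$; $\mathrm{M}((x_n)_{n\ge1};\lambda,j)$ is the set of dyadic cubes $\lambda'\subseteq\lambda$ of generation $\langle\lambda\rangle+j$ containing some $x_n$ with $n\le2^{d\langle\lambda'\rangle}$. *)

theory Defs
  imports "HOL-Analysis.Analysis"
begin

definition is_norm :: "(real^'n \<Rightarrow> real) \<Rightarrow> bool" where
  "is_norm N \<longleftrightarrow> (\<forall>x. 0 \<le> N x) \<and> (\<forall>x. N x = 0 \<longleftrightarrow> x = 0)
     \<and> (\<forall>c x. N (c *\<^sub>R x) = \<bar>c\<bar> * N x) \<and> (\<forall>x y. N (x + y) \<le> N x + N y)"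

definition nball :: "(real^'n \<Rightarrow> real) \<Rightarrow> real^'n \<Rightarrow> real \<Rightarrow> (real^'n) set" where
  "nball N x r = {y. N (y - x) < r}"

definition ndiam :: "(real^'n \<Rightarrow> real) \<Rightarrow> (real^'n) set \<Rightarrow> real" where
  "ndiam N S = Sup {N (y - z) | y z. y \<in> S \<and> z \<in> S}"

definition admissible :: "(real^'n \<Rightarrow> real) \<Rightarrow> (real^'n) set \<Rightarrow> (real^'n \<Rightarrow> real) \<Rightarrow> bool" where
  "admissible N A H \<longleftrightarrow> countable A \<and> infinite A \<and> (\<forall>a\<in>A. 0 < H a)
     \<and> (\<forall>m::nat. m \<ge> 1 \<longrightarrow> finite {a\<in>A. N a < real m \<and> H a \<le> real m})"

definition regular_system ::
  "(real^'n \<Rightarrow> real) \<Rightarrow> (real^'n) set \<Rightarrow> (real^'n \<Rightarrow> real) \<Rightarrow> (real^'n) set \<Rightarrow> bool" where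
  "regular_system N A H U \<longleftrightarrow> admissible N A H \<and>
     (\<exists>\<kappa>>0. \<forall>x r. r > 0 \<and> nball N x r \<subseteq> U \<longrightarrow>
        (\<exists>hB>0. \<forall>h>hB. \<exists>S. S \<subseteq> A \<inter> nball N x r \<and> finite S
            \<and> real (card S) \<ge> \<kappa> * (ndiam N (nball N x r)) ^ CARD('n) * h ^ CARD('n)
            \<and> (\<forall>a\<in>S. H a \<le> h)
            \<and> (\<forall>a\<in>S. \<forall>a'\<in>S. a \<noteq> a' \<longrightarrow> N (a - a') \<ge> 1 / h)))"

definition optimal_system ::
  "(real^'n \<Rightarrow> real) \<Rightarrow> (real^'n) set \<Rightarrow> (real^'n \<Rightarrow> real) \<Rightarrow> (real^'n) set \<Rightarrow> bool" where
  "optimal_system N A H U \<longleftrightarrow> admissible N A H \<and>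
     (\<forall>x r. r > 0 \<longrightarrow> (\<exists>\<kappa>'>0. \<exists>h'>0. \<forall>h>h'.
        finite {a \<in> A \<inter> U \<inter> nball N x r. H a \<le> h} \<and>
        real (card {a \<in> A \<inter> U \<inter> nball N x r. H a \<le> h}) \<le> \<kappa>' * h ^ CARD('n)))"

definition optimal_regular_system ::
  "(real^'n \<Rightarrow> real) \<Rightarrow> (real^'n) set \<Rightarrow> (real^'n \<Rightarrow> real) \<Rightarrow> (real^'n) set \<Rightarrow> bool" where
  "optimal_regular_system N A H U \<longleftrightarrow> optimal_system N A H U \<and> regular_system N A H U"

definition dyadic_cube :: "int \<Rightarrow> ('n \<Rightarrow> int) \<Rightarrow> (real^'n) set" where
  "dyadic_cube j k = {x. \<forall>i. real_of_int (k i) \<le> 2 powr (real_of_int j) * x $ i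
                            \<and> 2 powr (real_of_int j) * x $ i < real_of_int (k i) + 1}"

text \<open>M((x_n); lambda, j) for lambda = dyadic_cube g k, represented by the
  indices k' of the subcubes of generation g + j.\<close>
definition dyadicM :: "(nat \<Rightarrow> real^'n) \<Rightarrow> int \<Rightarrow> ('n \<Rightarrow> int) \<Rightarrow> nat \<Rightarrow> ('n \<Rightarrow> int) set" where
  "dyadicM x g k j = {k'. dyadic_cube (g + int j) k' \<subseteq> dyadic_cube g k \<and>
      (\<exists>n\<ge>1. real n \<le> 2 powr (real CARD('n) * real_of_int (g + int j))
              \<and> x n \<in> dyadic_cube (g + int j) k')}"

end

theory Submission
  imports Defs
begin

text \<open>Fix a dyadic cube \<open>\<lambda>\<close> of generation \<open>g\<close> in \<open>U\<close>. By the density hypothesis, for large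
  \<open>G\<close> roughly \<open>2^{d(G-g)}\<close> subcubes of \<open>\<lambda>\<close> of generation \<open>G\<close> contain a point \<open>a_n\<close> with
  \<open>n \<le> 2^{dG}\<close>. The most frequent parity pattern of their integer indices is shared by a
  \<open>2^{-d}\<close> fraction of them, and points taken in distinct subcubes with the same parity pattern
  are \<open>2^{-G}\<close> apart, since a whole subcube lies between them. Choosing \<open>2^G \<approx> h\<close> (up to the
  constant comparing the given norm with the Euclidean one) gives a constant times
  \<open>(2^{-g} h)^d\<close> points of height at most \<open>h\<close> in \<open>\<lambda>\<close>, pairwise \<open>1/h\<close>-separated; as every ball
  in \<open>U\<close> contains a dyadic cube of comparable size, the system is regular. Optimality is
  immediate: a point of height at most \<open>h\<close> is some \<open>a_n\<close> with \<open>n \<le> h^d\<close>.\<close>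

lemma is_normD:
  assumes "is_norm N"
  shows "0 \<le> N x" "N x = 0 \<longleftrightarrow> x = 0" "N (c *\<^sub>R x) = \<bar>c\<bar> * N x" "N (x + y) \<le> N x + N y"
  using assms unfolding is_norm_def by blast+

lemma is_norm_zero: "is_norm N \<Longrightarrow> N 0 = 0"
  by (simp add: is_normD(2))

lemma is_norm_minus_commute:
  assumes "is_norm N"
  shows "N (x - y) = N (y - x)"
  using is_normD(3)[OF assms, of "-1" "y - x"] by simp

lemma is_norm_sum_le:
  assumes "is_norm N" "finite S"
  shows "N (sum f S) \<le> (\<Sum>i\<in>S. N (f i))"
  using assms(2)
proof (induction S rule: finite_induct)
  case empty
  show ?case by (simp add: is_norm_zero[OF assms(1)])
next
  case (insert i S)
  then show ?case using is_normD(4)[OF assms(1), of "f i" "sum f S"] by simp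
qed

lemma is_norm_upper_bound:
  fixes N :: "real^'n \<Rightarrow> real"
  assumes "is_norm N"
  obtains C where "C > 0" "\<And>y. N y \<le> C * norm y"
proof
  define C where "C = (\<Sum>i\<in>UNIV. N (axis i 1)) + 1"
  show "C > 0"
    unfolding C_def using is_normD(1)[OF assms] by (simp add: add_nonneg_pos sum_nonneg)
  fix y :: "real^'n"
  have "N y = N (\<Sum>i\<in>UNIV. y $ i *\<^sub>R axis i 1)"
    using basis_expansion[of y] by (simp add: scalar_mult_eq_scaleR)
  also have "\<dots> \<le> (\<Sum>i\<in>UNIV. N (y $ i *\<^sub>R axis i 1))"
    by (simp add: is_norm_sum_le[OF assms])
  also have "\<dots> = (\<Sum>i\<in>UNIV. \<bar>y $ i\<bar> * N (axis i 1))"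
    by (simp add: is_normD(3)[OF assms])
  also have "\<dots> \<le> (\<Sum>i\<in>UNIV. norm y * N (axis i 1))"
    by (intro sum_mono mult_right_mono component_le_norm_cart is_normD(1)[OF assms])
  also have "\<dots> \<le> C * norm y"
    unfolding C_def by (simp add: sum_distrib_left algebra_simps)
  finally show "N y \<le> C * norm y" .
qed

lemma is_norm_lower_bound:
  fixes N :: "real^'n \<Rightarrow> real"
  assumes "is_norm N"
  obtains m where "m > 0" "\<And>y. m * norm y \<le> N y"
proof -
  obtain C where C: "C > 0" "\<And>y. N y \<le> C * norm y"
    using is_norm_upper_bound[OF assms] by blast
  have "C-lipschitz_on (sphere 0 1) N"
  proof (rule lipschitz_onI)
    fix x y :: "real^'n"
    have "N x \<le> N y + N (x - y)" "N y \<le> N x + N (x - y)"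
      using is_normD(4)[OF assms, of y "x - y"] is_normD(4)[OF assms, of x "y - x"]
        is_norm_minus_commute[OF assms, of x y] by simp_all
    then have "dist (N x) (N y) \<le> N (x - y)" by (simp add: dist_real_def)
    also have "\<dots> \<le> C * dist x y" by (simp add: C(2) dist_norm)
    finally show "dist (N x) (N y) \<le> C * dist x y" .
  qed (use C in simp)
  then have "continuous_on (sphere 0 1) N" by (rule lipschitz_on_continuous_on)
  moreover have "sphere (0::real^'n) 1 \<noteq> {}"
    using norm_axis_1 by (metis mem_sphere_0 empty_iff)
  ultimately obtain x0 where x0: "x0 \<in> sphere 0 1" "\<And>y. y \<in> sphere 0 1 \<Longrightarrow> N x0 \<le> N y"
    using continuous_attains_inf[OF compact_sphere] by blast
  show thesis
  proof
    show "N x0 > 0"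
      using x0(1) is_normD(1,2)[OF assms, of x0] by fastforce
    fix y :: "real^'n"
    show "N x0 * norm y \<le> N y"
    proof (cases "y = 0")
      case True
      then show ?thesis by (simp add: is_norm_zero[OF assms])
    next
      case False
      then have "N x0 \<le> N ((1 / norm y) *\<^sub>R y)" by (intro x0(2)) simp
      also have "\<dots> = N y / norm y" by (simp add: is_normD(3)[OF assms])
      finally show ?thesis using False by (simp add: field_simps)
    qed
  qed
qed

lemma ndiam_nball_le:
  assumes "is_norm N" "r > 0"
  shows "0 \<le> ndiam N (nball N x r)" "ndiam N (nball N x r) \<le> 2 * r"
proof -
  define D where "D = {N (y - z) | y z. y \<in> nball N x r \<and> z \<in> nball N x r}"
  have D_le: "t \<le> 2 * r" if tD: "t \<in> D" for t
  proof -
    obtain y z where "t = N (y - z)" "N (y - x) < r" "N (z - x) < r"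
      using tD unfolding D_def nball_def by blast
    moreover have "N (y - z) \<le> N (y - x) + N (z - x)"
      using is_normD(4)[OF assms(1), of "y - x" "x - z"] is_norm_minus_commute[OF assms(1), of x z]
      by simp
    ultimately show ?thesis by linarith
  qed
  have "x \<in> nball N x r" using assms by (simp add: nball_def is_norm_zero)
  then have "N (x - x) \<in> D" unfolding D_def by blast
  then have "0 \<in> D" by (simp add: is_norm_zero[OF assms(1)])
  then show "0 \<le> ndiam N (nball N x r)" "ndiam N (nball N x r) \<le> 2 * r"
    unfolding ndiam_def D_def[symmetric] using D_le
    by (auto intro!: cSup_upper cSup_least bdd_aboveI[of D "2 * r"])
qed

lemma dyadic_cube_index_eq_floor:
  assumes "x \<in> dyadic_cube G k"
  shows "k i = \<lfloor>2 powr real_of_int G * x $ i\<rfloor>"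
  using assms unfolding dyadic_cube_def by (metis (mono_tags, lifting) floor_unique mem_Collect_eq)

lemma mem_dyadic_cube_floor: "x \<in> dyadic_cube G (\<lambda>i. \<lfloor>2 powr real_of_int G * x $ i\<rfloor>)"
  unfolding dyadic_cube_def by auto

lemma dyadic_cube_component_dist:
  assumes "x \<in> dyadic_cube G k" "y \<in> dyadic_cube G k"
  shows "\<bar>x $ i - y $ i\<bar> < 2 powr (- real_of_int G)"
proof -
  have "real_of_int (k i) \<le> 2 powr real_of_int G * x $ i"
    "2 powr real_of_int G * x $ i < real_of_int (k i) + 1"
    "real_of_int (k i) \<le> 2 powr real_of_int G * y $ i"
    "2 powr real_of_int G * y $ i < real_of_int (k i) + 1"
    using assms unfolding dyadic_cube_def by auto
  then have "\<bar>2 powr real_of_int G * x $ i - 2 powr real_of_int G * y $ i\<bar> < 1" by linarith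
  then have "2 powr real_of_int G * \<bar>x $ i - y $ i\<bar> < 1"
    by (simp add: abs_mult right_diff_distrib[symmetric])
  then show ?thesis by (simp add: powr_minus field_simps)
qed

lemma dyadic_cube_norm_diff_le:
  fixes x y :: "real^'n"
  assumes "x \<in> dyadic_cube G k" "y \<in> dyadic_cube G k"
  shows "norm (x - y) \<le> real CARD('n) * 2 powr (- real_of_int G)"
proof -
  have "norm (x - y) \<le> (\<Sum>i\<in>UNIV. \<bar>(x - y) $ i\<bar>)" by (rule norm_le_l1_cart)
  also have "\<dots> \<le> (\<Sum>i\<in>(UNIV::'n set). 2 powr (- real_of_int G))"
    by (intro sum_mono) (use dyadic_cube_component_dist[OF assms] in \<open>simp add: less_imp_le\<close>)
  finally show ?thesis by simp
qed

lemma dyadic_cube_same_parity_separated: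
  assumes "x \<in> dyadic_cube G k" "y \<in> dyadic_cube G k'"
    and "k i \<noteq> k' i" "even (k i) \<longleftrightarrow> even (k' i)"
  shows "2 powr (- real_of_int G) \<le> norm (x - y)"
proof -
  have "even (k i - k' i)" by (simp add: assms(4))
  then have "2 \<le> \<bar>k i - k' i\<bar>" using assms(3) by (auto simp: dvd_def abs_mult)
  then have "2 \<le> \<bar>real_of_int (k i) - real_of_int (k' i)\<bar>" by linarith
  moreover have "real_of_int (k i) \<le> 2 powr real_of_int G * x $ i"
    "2 powr real_of_int G * x $ i < real_of_int (k i) + 1"
    "real_of_int (k' i) \<le> 2 powr real_of_int G * y $ i"
    "2 powr real_of_int G * y $ i < real_of_int (k' i) + 1"
    using assms(1,2) unfolding dyadic_cube_def by auto
  ultimately have "1 < \<bar>2 powr real_of_int G * x $ i - 2 powr real_of_int G * y $ i\<bar>"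
    by linarith
  then have "1 < 2 powr real_of_int G * \<bar>x $ i - y $ i\<bar>"
    by (simp add: abs_mult right_diff_distrib[symmetric])
  then have "2 powr (- real_of_int G) < \<bar>x $ i - y $ i\<bar>"
    by (simp add: powr_minus field_simps)
  also have "\<dots> \<le> norm (x - y)" using component_le_norm_cart[of "x - y" i] by simp
  finally show ?thesis by simp
qed

lemma dyadicM_separated_points:
  fixes a :: "nat \<Rightarrow> real^'n"
  assumes "finite (dyadicM a g k j)"
  obtains S where
    "S \<subseteq> dyadic_cube g k \<inter> a ` {n. 1 \<le> n \<and> real n \<le> 2 powr (real CARD('n) * real_of_int (g + int j))}"
    "finite S" "card (dyadicM a g k j) \<le> 2 ^ CARD('n) * card S"
    "\<forall>p\<in>S. \<forall>q\<in>S. p \<noteq> q \<longrightarrow> 2 powr (- real_of_int (g + int j)) \<le> norm (p - q)"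
proof -
  define M where "M = dyadicM a g k j"
  define G where "G = g + int j"
  define bound where "bound = 2 powr (real CARD('n) * real_of_int G)"
  define parity where "parity k' = {i. odd (k' i)}" for k' :: "'n \<Rightarrow> int"
  obtain P where "card (parity -` {P} \<inter> M) * card (UNIV :: 'n set set) \<ge> card M"
    using pigeonhole_card[of parity M UNIV] assms unfolding M_def by auto
  moreover define M' where "M' = parity -` {P} \<inter> M"
  moreover have "card (UNIV :: 'n set set) = 2 ^ CARD('n)"
    using card_Pow[of "UNIV :: 'n set"] by (simp add: Pow_UNIV)
  ultimately have card_M: "card M \<le> 2 ^ CARD('n) * card M'"
    by (simp add: mult.commute)
  have "\<forall>k'\<in>M'. \<exists>n. 1 \<le> n \<and> real n \<le> bound \<and> a n \<in> dyadic_cube G k'"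
    unfolding M'_def M_def dyadicM_def bound_def G_def by auto
  then obtain pick where pick: "\<And>k'. k' \<in> M' \<Longrightarrow>
      1 \<le> pick k' \<and> real (pick k') \<le> bound \<and> a (pick k') \<in> dyadic_cube G k'"
    by metis
  have sub: "dyadic_cube G k' \<subseteq> dyadic_cube g k" if "k' \<in> M'" for k'
    using that unfolding M'_def M_def dyadicM_def G_def by auto
  have inj: "inj_on (a \<circ> pick) M'"
  proof (rule inj_onI)
    fix k1 k2 assume k: "k1 \<in> M'" "k2 \<in> M'" "(a \<circ> pick) k1 = (a \<circ> pick) k2"
    show "k1 = k2"
    proof
      fix i
      show "k1 i = k2 i"
        using dyadic_cube_index_eq_floor[of "a (pick k1)" G k1 i]
          dyadic_cube_index_eq_floor[of "a (pick k2)" G k2 i] pick[OF k(1)] pick[OF k(2)] k(3)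
        by simp
    qed
  qed
  define S where "S = (a \<circ> pick) ` M'"
  have "S \<subseteq> dyadic_cube g k \<inter> a ` {n. 1 \<le> n \<and> real n \<le> bound}"
    unfolding S_def
  proof
    fix p assume "p \<in> (a \<circ> pick) ` M'"
    then obtain k' where "k' \<in> M'" "p = a (pick k')" by auto
    then show "p \<in> dyadic_cube g k \<inter> a ` {n. 1 \<le> n \<and> real n \<le> bound}"
      using pick[of k'] sub[of k'] by blast
  qed
  moreover have "finite S"
    using assms unfolding S_def M_def M'_def by simp
  moreover have "card M \<le> 2 ^ CARD('n) * card S"
    unfolding S_def using card_M card_image[OF inj] by simp
  moreover have "\<forall>p\<in>S. \<forall>q\<in>S. p \<noteq> q \<longrightarrow> 2 powr (- real_of_int G) \<le> norm (p - q)"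
  proof (intro ballI impI)
    fix p q assume "p \<in> S" "q \<in> S" "p \<noteq> q"
    then obtain k1 k2 where k: "k1 \<in> M'" "k2 \<in> M'" "p = a (pick k1)" "q = a (pick k2)" "k1 \<noteq> k2"
      unfolding S_def by auto
    then obtain i where i: "k1 i \<noteq> k2 i" by auto
    have "parity k1 = parity k2" using k unfolding M'_def by simp
    then have "even (k1 i) \<longleftrightarrow> even (k2 i)" unfolding parity_def by blast
    then show "2 powr (- real_of_int G) \<le> norm (p - q)"
      using dyadic_cube_same_parity_separated[of p G k1 q k2 i] i pick[OF k(1)] pick[OF k(2)] k(3,4)
      by blast
  qed
  ultimately show thesis
    using that unfolding M_def G_def bound_def by blast
qed

lemma height_le:
  fixes a :: "nat \<Rightarrow> 'a"
  assumes H: "\<And>p. H p = real (LEAST n. n \<ge> 1 \<and> p = a n) powr (1 / real d)"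
    and "0 < d" "1 \<le> n" "real n \<le> t ^ d" "0 < t"
  shows "H (a n) \<le> t"
proof -
  have "1 \<le> (LEAST n'. n' \<ge> 1 \<and> a n = a n')" "(LEAST n'. n' \<ge> 1 \<and> a n = a n') \<le> n"
    using LeastI[of "\<lambda>n'. n' \<ge> 1 \<and> a n = a n'" n] Least_le[of "\<lambda>n'. n' \<ge> 1 \<and> a n = a n'" n]
      assms(3) by auto
  then have "H (a n) \<le> real n powr (1 / real d)"
    unfolding H by (intro powr_mono2) auto
  also have "\<dots> \<le> (t ^ d) powr (1 / real d)"
    using assms(2,4) by (intro powr_mono2) auto
  also have "\<dots> = t"
    using assms(2,5) by (simp add: powr_realpow[symmetric] powr_powr)
  finally show ?thesis .
qed

lemma height_pos:
  fixes a :: "nat \<Rightarrow> 'a"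
  assumes H: "\<And>p. H p = real (LEAST n. n \<ge> 1 \<and> p = a n) powr (1 / real d)"
    and "p \<in> a ` {1..}"
  shows "0 < H p"
proof -
  obtain n where "1 \<le> n" "p = a n" using assms(2) by auto
  then have "1 \<le> (LEAST n. n \<ge> 1 \<and> p = a n)"
    using LeastI[of "\<lambda>n. n \<ge> 1 \<and> p = a n" n] by auto
  then show ?thesis unfolding H by simp
qed

lemma height_count:
  fixes a :: "nat \<Rightarrow> 'a"
  assumes H: "\<And>p. H p = real (LEAST n. n \<ge> 1 \<and> p = a n) powr (1 / real d)"
    and "0 < d" "0 < h"
  shows "finite {p \<in> a ` {1..}. H p \<le> h}" "real (card {p \<in> a ` {1..}. H p \<le> h}) \<le> h ^ d"
proof -
  have sub: "{p \<in> a ` {1..}. H p \<le> h} \<subseteq> a ` {1..nat \<lfloor>h ^ d\<rfloor>}"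
  proof
    fix p assume p: "p \<in> {p \<in> a ` {1..}. H p \<le> h}"
    then obtain n0 where "1 \<le> n0" "p = a n0" by auto
    define n where "n = (LEAST n. n \<ge> 1 \<and> p = a n)"
    have n: "1 \<le> n" "p = a n"
      using LeastI[of "\<lambda>n. n \<ge> 1 \<and> p = a n" n0] \<open>1 \<le> n0\<close> \<open>p = a n0\<close> unfolding n_def by auto
    have "real n = (real n powr (1 / real d)) ^ d"
      using n assms(2) by (simp add: powr_realpow[symmetric] powr_powr)
    also have "\<dots> \<le> h ^ d"
      using p H[of p] unfolding n_def[symmetric] by (intro power_mono) auto
    finally have "n \<le> nat \<lfloor>h ^ d\<rfloor>" by (rule le_nat_floor)
    then show "p \<in> a ` {1..nat \<lfloor>h ^ d\<rfloor>}" using n by auto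
  qed
  then show "finite {p \<in> a ` {1..}. H p \<le> h}" by (rule finite_subset) simp
  have "card {p \<in> a ` {1..}. H p \<le> h} \<le> card (a ` {1..nat \<lfloor>h ^ d\<rfloor>})"
    using sub by (intro card_mono) auto
  also have "\<dots> \<le> nat \<lfloor>h ^ d\<rfloor>"
    using card_image_le[of "{1..nat \<lfloor>h ^ d\<rfloor>}" a] by simp
  finally have "real (card {p \<in> a ` {1..}. H p \<le> h}) \<le> real (nat \<lfloor>h ^ d\<rfloor>)"
    by linarith
  also have "\<dots> \<le> h ^ d" using assms(3) by simp
  finally show "real (card {p \<in> a ` {1..}. H p \<le> h}) \<le> h ^ d" .
qed

lemma dyadic_cube_in_nball:
  fixes N :: "real^'n \<Rightarrow> real" and C r :: real
  assumes "0 < C" "\<And>y. N y \<le> C * norm y" "0 < r"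
  obtains g k where "dyadic_cube g k \<subseteq> nball N x r" "r / (4 * C * CARD('n)) \<le> 2 powr - real_of_int g"
proof -
  define \<rho> where "\<rho> = r / (C * CARD('n))"
  have "0 < \<rho>" unfolding \<rho>_def using assms by simp
  define G where "G = \<lfloor>log 2 \<rho>\<rfloor>"
  have G: "2 powr G \<le> \<rho>" "\<rho> < 2 powr (G + 1)"
    using floor_log_eq_powr_iff[of \<rho> 2 G] \<open>0 < \<rho>\<close> unfolding G_def by auto
  define g where "g = 1 - G"
  define k where "k = (\<lambda>i. \<lfloor>2 powr real_of_int g * x $ i\<rfloor>)"
  have g_eq: "2 powr - real_of_int g = 2 powr G / 2"
    unfolding g_def by (simp add: powr_diff)
  show thesis
  proof
    show "dyadic_cube g k \<subseteq> nball N x r"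
    proof
      fix y assume "y \<in> dyadic_cube g k"
      moreover have "x \<in> dyadic_cube g k" unfolding k_def by (rule mem_dyadic_cube_floor)
      ultimately have "norm (y - x) \<le> CARD('n) * 2 powr - real_of_int g"
        by (rule dyadic_cube_norm_diff_le)
      moreover have "2 powr - real_of_int g < \<rho>" using g_eq G(1) \<open>0 < \<rho>\<close> by linarith
      ultimately have "norm (y - x) < CARD('n) * \<rho>"
        by (smt (verit) mult_strict_left_mono of_nat_0_less_iff zero_less_card_finite)
      then have "C * norm (y - x) < C * (CARD('n) * \<rho>)" using assms(1) by simp
      also have "\<dots> = r" unfolding \<rho>_def using assms(1) by simp
      finally have "N (y - x) < r" using assms(2)[of "y - x"] by linarith
      then show "y \<in> nball N x r" unfolding nball_def by simp
    qed
    have "\<rho> / 4 < 2 powr - real_of_int g" using G(2) unfolding g_eq by (simp add: powr_add)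
    then show "r / (4 * C * CARD('n)) \<le> 2 powr - real_of_int g"
      unfolding \<rho>_def by (simp add: field_simps)
  qed
qed

lemma ereal_Inf_pos_lower_bound:
  fixes F :: "'a \<Rightarrow> 'b \<Rightarrow> ereal"
  assumes "0 < Inf {F g k | g k. P g k}"
  obtains c :: real where "0 < c" "\<And>g k. P g k \<Longrightarrow> ereal c < F g k"
proof -
  obtain c where "ereal 0 < ereal c" "ereal c < Inf {F g k | g k. P g k}"
    using ereal_dense2[OF assms[unfolded zero_ereal_def]] by blast
  show thesis
  proof (rule that)
    show "0 < c" using \<open>ereal 0 < ereal c\<close> by simp
    fix g k assume "P g k"
    then have "Inf {F g k | g k. P g k} \<le> F g k" by (blast intro: Inf_lower)
    with \<open>ereal c < Inf {F g k | g k. P g k}\<close> show "ereal c < F g k" by (rule less_le_trans)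
  qed
qed

lemma dyadicM_card_eventually_gt:
  fixes a :: "nat \<Rightarrow> real^'n"
  assumes "0 < c"
    and "ereal c < liminf (\<lambda>j. ereal (2 powr (- real CARD('n) * real j) * real (card (dyadicM a g k j))))"
  obtains J where "\<And>j. J \<le> j \<Longrightarrow>
    finite (dyadicM a g k j) \<and> c * 2 powr (real CARD('n) * real j) < real (card (dyadicM a g k j))"
proof -
  define d where "d = CARD('n)"
  obtain J where J: "\<And>j. J \<le> j \<Longrightarrow> c < 2 powr (- real d * real j) * real (card (dyadicM a g k j))"
    using less_LiminfD[OF assms(2)] unfolding eventually_sequentially d_def by auto
  have "finite (dyadicM a g k j) \<and> c * 2 powr (real d * real j) < real (card (dyadicM a g k j))"
    if "J \<le> j" for j
  proof
    have "c * 2 powr (real d * real j)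
        < 2 powr (- real d * real j) * real (card (dyadicM a g k j)) * 2 powr (real d * real j)"
      using J[OF that] by simp
    also have "\<dots> = real (card (dyadicM a g k j)) * 2 powr (- real d * real j + real d * real j)"
      by (simp only: powr_add mult_ac)
    also have "\<dots> = real (card (dyadicM a g k j))" by simp
    finally show "c * 2 powr (real d * real j) < real (card (dyadicM a g k j))" .
    moreover have "0 < c * 2 powr (real d * real j)" using assms(1) by simp
    ultimately have "0 < card (dyadicM a g k j)" by linarith
    then show "finite (dyadicM a g k j)" using card_gt_0_iff by blast
  qed
  then show thesis using that unfolding d_def by blast
qed

lemma dyadic_density_separated_subsets:
  fixes a :: "nat \<Rightarrow> real^'n"
  assumes "0 < c"
    and "ereal c < liminf (\<lambda>j. ereal (2 powr (- real CARD('n) * real j) * real (card (dyadicM a g k j))))"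
  obtains t0 where "0 < t0"
    "\<And>t. t0 < t \<Longrightarrow> \<exists>S. S \<subseteq> dyadic_cube g k \<inter> a ` {n. 1 \<le> n \<and> real n \<le> t ^ CARD('n)}
        \<and> finite S \<and> c * (2 powr - real_of_int g / 4) ^ CARD('n) * t ^ CARD('n) \<le> real (card S)
        \<and> (\<forall>p\<in>S. \<forall>q\<in>S. p \<noteq> q \<longrightarrow> 1 / t \<le> norm (p - q))"
proof -
  define d where "d = CARD('n)"
  obtain J where J: "\<And>j. J \<le> j \<Longrightarrow>
      finite (dyadicM a g k j) \<and> c * 2 powr (real d * real j) < real (card (dyadicM a g k j))"
    using dyadicM_card_eventually_gt[OF assms] unfolding d_def by blast
  show thesis
  proof
    show "0 < 2 powr (real_of_int g + real J + 1)" by simp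
    fix t assume t: "2 powr (real_of_int g + real J + 1) < t"
    have "0 < t" using order.strict_trans[OF _ t] by simp
    define G where "G = \<lfloor>log 2 t\<rfloor>"
    have G: "2 powr G \<le> t" "t < 2 powr (G + 1)"
      using floor_log_eq_powr_iff[of t 2 G] \<open>0 < t\<close> unfolding G_def by auto
    have "real_of_int (g + int J) < real_of_int G"
      using less_trans[OF t G(2)] by simp
    define j where "j = nat (G - g)"
    have j: "g + int j = G" "J \<le> j" unfolding j_def using \<open>real_of_int (g + int J) < real_of_int G\<close> by auto
    have "real_of_int G = real_of_int g + real j" using j(1) by (metis of_int_add of_int_of_nat_eq)
    then have two_j: "2 powr real j = 2 powr G * 2 powr - real_of_int g"
      by (simp add: powr_add[symmetric])
    define M where "M = dyadicM a g k j"
    have "finite M" and card_M: "c * 2 powr (real d * real j) < real (card M)"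
      using J[OF j(2)] unfolding M_def by auto
    then obtain S where S: "S \<subseteq> dyadic_cube g k \<inter> a ` {n. 1 \<le> n \<and> real n \<le> 2 powr (real d * G)}"
      "finite S" "card M \<le> 2 ^ d * card S"
      "\<forall>p\<in>S. \<forall>q\<in>S. p \<noteq> q \<longrightarrow> 2 powr - real_of_int G \<le> norm (p - q)"
      using dyadicM_separated_points[of a g k j]
      unfolding M_def[symmetric] d_def[symmetric] j(1) by blast
    have "2 powr (real d * G) = (2 powr G) ^ d" by (simp add: powr_power)
    also have "\<dots> \<le> t ^ d" using G(1) by (simp add: power_mono)
    finally have index_bound: "2 powr (real d * G) \<le> t ^ d" .
    have separation: "1 / t \<le> 2 powr - real_of_int G"
      using G(1) \<open>0 < t\<close> by (simp add: powr_minus field_simps)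
    have "2 powr - real_of_int g / 4 * t \<le> 2 powr real j / 2"
      using G(2) unfolding two_j by (simp add: powr_add field_simps)
    have "c * (2 powr - real_of_int g / 4) ^ d * t ^ d = c * (2 powr - real_of_int g / 4 * t) ^ d"
      by (simp only: power_mult_distrib mult.assoc)
    also have "\<dots> \<le> c * (2 powr real j / 2) ^ d"
      using \<open>2 powr - real_of_int g / 4 * t \<le> 2 powr real j / 2\<close> assms(1) \<open>0 < t\<close>
      by (intro mult_left_mono power_mono) auto
    also have "\<dots> = c * 2 powr (real d * real j) / 2 ^ d"
      by (simp add: power_divide powr_power)
    also have "\<dots> \<le> real (card S)"
    proof -
      have "real (card M) \<le> 2 ^ d * real (card S)"
        using S(3) by (metis of_nat_le_iff of_nat_mult of_nat_numeral of_nat_power)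
      then show ?thesis using card_M by (simp add: pos_divide_le_eq mult.commute)
    qed
    finally have "c * (2 powr - real_of_int g / 4) ^ d * t ^ d \<le> real (card S)" .
    moreover have "S \<subseteq> dyadic_cube g k \<inter> a ` {n. 1 \<le> n \<and> real n \<le> t ^ d}"
      using S(1) index_bound by (force intro: order_trans)
    moreover have "\<forall>p\<in>S. \<forall>q\<in>S. p \<noteq> q \<longrightarrow> 1 / t \<le> norm (p - q)"
      using S(4) separation by (blast intro: order_trans)
    ultimately show "\<exists>S. S \<subseteq> dyadic_cube g k \<inter> a ` {n. 1 \<le> n \<and> real n \<le> t ^ CARD('n)}
        \<and> finite S \<and> c * (2 powr - real_of_int g / 4) ^ CARD('n) * t ^ CARD('n) \<le> real (card S)
        \<and> (\<forall>p\<in>S. \<forall>q\<in>S. p \<noteq> q \<longrightarrow> 1 / t \<le> norm (p - q))"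
      using S(2) unfolding d_def by blast
  qed
qed

lemma dyadic_density_height_separated:
  fixes N :: "real^'n \<Rightarrow> real" and a :: "nat \<Rightarrow> real^'n"
  assumes "0 < c"
    and "ereal c < liminf (\<lambda>j. ereal (2 powr (- real CARD('n) * real j) * real (card (dyadicM a g k j))))"
    and H: "\<And>p. H p = real (LEAST n. n \<ge> 1 \<and> p = a n) powr (1 / real CARD('n))"
    and m: "0 < m" "m \<le> 1" "\<And>y. m * norm y \<le> N y"
  obtains hB where "0 < hB"
    "\<And>h. hB < h \<Longrightarrow> \<exists>S. S \<subseteq> dyadic_cube g k \<inter> a ` {1..} \<and> finite S
        \<and> c * (2 powr - real_of_int g / 4) ^ CARD('n) * (m * h) ^ CARD('n) \<le> real (card S)
        \<and> (\<forall>p\<in>S. H p \<le> h) \<and> (\<forall>p\<in>S. \<forall>q\<in>S. p \<noteq> q \<longrightarrow> 1 / h \<le> N (p - q))"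
proof -
  obtain t0 where t0: "0 < t0" "\<And>t. t0 < t \<Longrightarrow> \<exists>S.
      S \<subseteq> dyadic_cube g k \<inter> a ` {n. 1 \<le> n \<and> real n \<le> t ^ CARD('n)} \<and> finite S
      \<and> c * (2 powr - real_of_int g / 4) ^ CARD('n) * t ^ CARD('n) \<le> real (card S)
      \<and> (\<forall>p\<in>S. \<forall>q\<in>S. p \<noteq> q \<longrightarrow> 1 / t \<le> norm (p - q))"
    using dyadic_density_separated_subsets[OF assms(1,2)] by blast
  show thesis
  proof
    show "0 < t0 / m" using t0(1) m(1) by simp
    fix h assume "t0 / m < h"
    then have "t0 < m * h" using m(1) by (simp add: field_simps)
    then have "0 < h" using m(1) t0(1) by (smt (verit) mult_nonneg_nonpos)
    obtain S where S: "S \<subseteq> dyadic_cube g k \<inter> a ` {n. 1 \<le> n \<and> real n \<le> (m * h) ^ CARD('n)}"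
      "finite S" "c * (2 powr - real_of_int g / 4) ^ CARD('n) * (m * h) ^ CARD('n) \<le> real (card S)"
      "\<forall>p\<in>S. \<forall>q\<in>S. p \<noteq> q \<longrightarrow> 1 / (m * h) \<le> norm (p - q)"
      using t0(2)[OF \<open>t0 < m * h\<close>] by blast
    show "\<exists>S. S \<subseteq> dyadic_cube g k \<inter> a ` {1..} \<and> finite S
        \<and> c * (2 powr - real_of_int g / 4) ^ CARD('n) * (m * h) ^ CARD('n) \<le> real (card S)
        \<and> (\<forall>p\<in>S. H p \<le> h) \<and> (\<forall>p\<in>S. \<forall>q\<in>S. p \<noteq> q \<longrightarrow> 1 / h \<le> N (p - q))"
    proof (intro exI[of _ S] conjI ballI impI)
      show "S \<subseteq> dyadic_cube g k \<inter> a ` {1..}" using S(1) by auto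
      fix p assume "p \<in> S"
      then obtain n where n: "p = a n" "1 \<le> n" "real n \<le> (m * h) ^ CARD('n)" using S(1) by auto
      have "(m * h) ^ CARD('n) \<le> h ^ CARD('n)" using m \<open>0 < h\<close> by (simp add: power_mono)
      then show "H p \<le> h"
        unfolding n(1) using n(2,3) \<open>0 < h\<close> by (intro height_le[OF H]) simp_all
      fix q assume "q \<in> S" "p \<noteq> q"
      then have "1 / (m * h) \<le> norm (p - q)" using S(4) \<open>p \<in> S\<close> by blast
      then have "1 / h \<le> m * norm (p - q)" using m(1) \<open>0 < h\<close> by (simp add: field_simps)
      then show "1 / h \<le> N (p - q)" using m(3) order_trans by blast
    qed (use S in auto)
  qed
qed

lemma dyadic_density_regular:
  fixes N :: "real^'n \<Rightarrow> real" and a :: "nat \<Rightarrow> real^'n"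
  assumes N: "is_norm N" and "0 < c"
    and density: "\<And>g k. dyadic_cube g k \<subseteq> U \<Longrightarrow>
      ereal c < liminf (\<lambda>j. ereal (2 powr (- real CARD('n) * real j) * real (card (dyadicM a g k j))))"
    and H: "\<And>p. H p = real (LEAST n. n \<ge> 1 \<and> p = a n) powr (1 / real CARD('n))"
  shows "\<exists>\<kappa>>0. \<forall>x r. r > 0 \<and> nball N x r \<subseteq> U \<longrightarrow>
      (\<exists>hB>0. \<forall>h>hB. \<exists>S. S \<subseteq> a ` {1..} \<inter> nball N x r \<and> finite S
        \<and> real (card S) \<ge> \<kappa> * (ndiam N (nball N x r)) ^ CARD('n) * h ^ CARD('n)
        \<and> (\<forall>p\<in>S. H p \<le> h) \<and> (\<forall>p\<in>S. \<forall>q\<in>S. p \<noteq> q \<longrightarrow> N (p - q) \<ge> 1 / h))"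
proof -
  define d where "d = CARD('n)"
  obtain C where C: "0 < C" "\<And>y. N y \<le> C * norm y" using is_norm_upper_bound[OF N] by blast
  obtain m0 where m0: "0 < m0" "\<And>y. m0 * norm y \<le> N y" using is_norm_lower_bound[OF N] by blast
  define m where "m = min m0 1"
  have m: "0 < m" "m \<le> 1" "\<And>y. m * norm y \<le> N y"
    using m0 unfolding m_def by (auto intro: order_trans[OF mult_right_mono[OF min.cobounded1]])
  define \<kappa> where "\<kappa> = c * (m / (32 * C * d)) ^ d"
  have "0 < \<kappa>" unfolding \<kappa>_def d_def using \<open>0 < c\<close> m C by simp
  moreover have "\<exists>hB>0. \<forall>h>hB. \<exists>S. S \<subseteq> a ` {1..} \<inter> nball N x r \<and> finite S
        \<and> real (card S) \<ge> \<kappa> * (ndiam N (nball N x r)) ^ d * h ^ d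
        \<and> (\<forall>p\<in>S. H p \<le> h) \<and> (\<forall>p\<in>S. \<forall>q\<in>S. p \<noteq> q \<longrightarrow> N (p - q) \<ge> 1 / h)"
    if r: "0 < r" "nball N x r \<subseteq> U" for x r
  proof -
    obtain g k where cube: "dyadic_cube g k \<subseteq> nball N x r" "r / (4 * C * d) \<le> 2 powr - real_of_int g"
      using dyadic_cube_in_nball[OF C r(1)] unfolding d_def by blast
    obtain hB where hB: "0 < hB" "\<And>h. hB < h \<Longrightarrow> \<exists>S. S \<subseteq> dyadic_cube g k \<inter> a ` {1..} \<and> finite S
        \<and> c * (2 powr - real_of_int g / 4) ^ d * (m * h) ^ d \<le> real (card S)
        \<and> (\<forall>p\<in>S. H p \<le> h) \<and> (\<forall>p\<in>S. \<forall>q\<in>S. p \<noteq> q \<longrightarrow> 1 / h \<le> N (p - q))"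
      using dyadic_density_height_separated[OF \<open>0 < c\<close> density[OF order.trans[OF cube(1) r(2)]] H m]
      unfolding d_def[symmetric] by blast
    have card_bound: "\<kappa> * ndiam N (nball N x r) ^ d * h ^ d
        \<le> c * (2 powr - real_of_int g / 4) ^ d * (m * h) ^ d" if "0 < h" for h
    proof -
      define D where "D = ndiam N (nball N x r)"
      have D: "0 \<le> D" "D \<le> 2 * r" unfolding D_def using ndiam_nball_le[OF N r(1)] by auto
      have scale: "m / (32 * C * d) * (2 * r) * h = r / (4 * C * d) / 4 * (m * h)"
        using C(1) by (simp add: d_def field_simps)
      have "\<kappa> * D ^ d * h ^ d = c * (m / (32 * C * d) * D * h) ^ d"
        unfolding \<kappa>_def by (simp only: power_mult_distrib mult.assoc)
      also have "\<dots> \<le> c * (m / (32 * C * d) * (2 * r) * h) ^ d"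
        using D \<open>0 < c\<close> m(1) C(1) \<open>0 < h\<close>
        by (intro mult_left_mono power_mono mult_right_mono) (auto simp: d_def)
      also have "\<dots> = c * (r / (4 * C * d) / 4 * (m * h)) ^ d" unfolding scale ..
      also have "\<dots> \<le> c * (2 powr - real_of_int g / 4 * (m * h)) ^ d"
        using cube(2) \<open>0 < c\<close> m(1) \<open>0 < h\<close> C(1) r(1)
        by (intro mult_left_mono power_mono mult_right_mono divide_right_mono) (auto simp: d_def)
      also have "\<dots> = c * (2 powr - real_of_int g / 4) ^ d * (m * h) ^ d"
        by (simp only: power_mult_distrib mult.assoc)
      finally show ?thesis unfolding D_def .
    qed
    show ?thesis
    proof (intro exI[of _ hB] conjI allI impI)
      show "0 < hB" by (rule hB(1))
      fix h assume "hB < h"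
      then have "0 < h" using hB(1) by simp
      obtain S where S: "S \<subseteq> dyadic_cube g k \<inter> a ` {1..}" "finite S"
        "c * (2 powr - real_of_int g / 4) ^ d * (m * h) ^ d \<le> real (card S)"
        "\<forall>p\<in>S. H p \<le> h" "\<forall>p\<in>S. \<forall>q\<in>S. p \<noteq> q \<longrightarrow> 1 / h \<le> N (p - q)"
        using hB(2)[OF \<open>hB < h\<close>] by blast
      show "\<exists>S. S \<subseteq> a ` {1..} \<inter> nball N x r \<and> finite S
        \<and> real (card S) \<ge> \<kappa> * (ndiam N (nball N x r)) ^ d * h ^ d
        \<and> (\<forall>p\<in>S. H p \<le> h) \<and> (\<forall>p\<in>S. \<forall>q\<in>S. p \<noteq> q \<longrightarrow> N (p - q) \<ge> 1 / h)"
      proof (intro exI[of _ S] conjI)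
        show "S \<subseteq> a ` {1..} \<inter> nball N x r" using S(1) cube(1) by blast
        show "\<kappa> * ndiam N (nball N x r) ^ d * h ^ d \<le> real (card S)"
          using card_bound[OF \<open>0 < h\<close>] S(3) by linarith
      qed (use S in auto)
    qed
  qed
  ultimately show ?thesis unfolding d_def by blast
qed

lemma dyadic_density_infinite_range:
  fixes a :: "nat \<Rightarrow> real^'n"
  assumes "open U" "U \<noteq> {}" "0 < c"
    and density: "\<And>g k. dyadic_cube g k \<subseteq> U \<Longrightarrow>
      ereal c < liminf (\<lambda>j. ereal (2 powr (- real CARD('n) * real j) * real (card (dyadicM a g k j))))"
  shows "infinite (a ` {1..})"
proof
  assume fin: "finite (a ` {1..})"
  obtain x e where "0 < e" "ball x e \<subseteq> U" using assms(1,2) open_contains_ball by blast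
  obtain g k where "dyadic_cube g k \<subseteq> nball norm x e"
    using dyadic_cube_in_nball[of 1 norm e x] \<open>0 < e\<close> by (metis mult_1 order_refl zero_less_one)
  moreover have "nball norm x e = ball x e"
    unfolding nball_def ball_def by (simp add: dist_norm norm_minus_commute)
  ultimately have "dyadic_cube g k \<subseteq> U" using \<open>ball x e \<subseteq> U\<close> by simp
  then obtain t0 where t0: "0 < t0" "\<And>t. t0 < t \<Longrightarrow> \<exists>S.
        S \<subseteq> dyadic_cube g k \<inter> a ` {n. 1 \<le> n \<and> real n \<le> t ^ CARD('n)} \<and> finite S \<and> c * (2 powr - real_of_int g / 4) ^ CARD('n) * t ^ CARD('n) \<le> real (card S)
        \<and> (\<forall>p\<in>S. \<forall>q\<in>S. p \<noteq> q \<longrightarrow> 1 / t \<le> norm (p - q))"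
    using dyadic_density_separated_subsets[OF \<open>0 < c\<close> density] by blast
  define K where "K = c * (2 powr - real_of_int g / 4) ^ CARD('n)"
  have "0 < K" unfolding K_def using \<open>0 < c\<close> by simp
  define t where "t = max (t0 + 1) (max 1 ((card (a ` {1..}) + 1) / K))"
  have "t0 < t" "1 \<le> t" "(card (a ` {1..}) + 1) / K \<le> t" unfolding t_def by auto
  obtain S where S: "S \<subseteq> dyadic_cube g k \<inter> a ` {n. 1 \<le> n \<and> real n \<le> t ^ CARD('n)}"
    "K * t ^ CARD('n) \<le> real (card S)"
    using t0(2)[OF \<open>t0 < t\<close>] unfolding K_def by blast
  have "card (a ` {1..}) + 1 \<le> K * t"
    using \<open>(card (a ` {1..}) + 1) / K \<le> t\<close> \<open>0 < K\<close> by (simp add: pos_divide_le_eq mult.commute)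
  also have "\<dots> \<le> K * t ^ CARD('n)"
    using \<open>1 \<le> t\<close> \<open>0 < K\<close> power_increasing[of 1 "CARD('n)" t] by simp
  also have "\<dots> \<le> card S" by (rule S(2))
  also have "card S \<le> card (a ` {1..})" using S(1) by (intro card_mono fin) auto
  finally show False by simp
qed

lemma enumeration_optimal_system:
  fixes N :: "real^'n \<Rightarrow> real" and a :: "nat \<Rightarrow> real^'n"
  assumes "infinite (a ` {1..})"
    and H: "\<And>p. H p = real (LEAST n. n \<ge> 1 \<and> p = a n) powr (1 / real CARD('n))"
  shows "optimal_system N (a ` {1..}) H U"
proof -
  note count = height_count[OF H zero_less_card_finite]
  have adm: "admissible N (a ` {1..}) H"
    unfolding admissible_def
  proof (intro conjI ballI allI impI)
    show "countable (a ` {1..})" by simp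
    show "infinite (a ` {1..})" by (rule assms(1))
    show "0 < H p" if "p \<in> a ` {1..}" for p using height_pos[OF H that] .
    show "finite {p \<in> a ` {1..}. N p < real m \<and> H p \<le> real m}" if "1 \<le> m" for m
    proof -
      have "0 < real m" using that by simp
      have "{p \<in> a ` {1..}. N p < real m \<and> H p \<le> real m} \<subseteq> {p \<in> a ` {1..}. H p \<le> real m}"
        by blast
      then show ?thesis using count(1)[OF \<open>0 < real m\<close>] by (rule finite_subset)
    qed
  qed
  show ?thesis
    unfolding optimal_system_def
  proof (intro conjI allI impI exI[of _ "1::real"])
    show "admissible N (a ` {1..}) H" by (rule adm)
    show "(0::real) < 1" by simp
    fix x :: "real^'n" and r h :: real
    assume "1 < h"
    then have "0 < h" by simp
    have sub: "{p \<in> a ` {1..} \<inter> U \<inter> nball N x r. H p \<le> h} \<subseteq> {p \<in> a ` {1..}. H p \<le> h}"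
      by blast
    show "finite {p \<in> a ` {1..} \<inter> U \<inter> nball N x r. H p \<le> h}"
      using sub count(1)[OF \<open>0 < h\<close>] by (rule finite_subset)
    have "card {p \<in> a ` {1..} \<inter> U \<inter> nball N x r. H p \<le> h} \<le> card {p \<in> a ` {1..}. H p \<le> h}"
      using count(1)[OF \<open>0 < h\<close>] sub by (rule card_mono)
    then show "real (card {p \<in> a ` {1..} \<inter> U \<inter> nball N x r. H p \<le> h}) \<le> 1 * h ^ CARD('n)"
      using count(2)[OF \<open>0 < h\<close>] by linarith
  qed simp
qed

theorem proposition9p4:
  fixes N :: "real^'n \<Rightarrow> real" and U :: "(real^'n) set" and a :: "nat \<Rightarrow> real^'n"
    and A :: "(real^'n) set" and H :: "real^'n \<Rightarrow> real"
  assumes "is_norm N"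
    and "open U" and "U \<noteq> {}"
    and "\<forall>n\<ge>1. a n \<in> U"
    and "Inf {liminf (\<lambda>j. ereal (2 powr (- real CARD('n) * real j) * real (card (dyadicM a g k j))))
              | g k. dyadic_cube g k \<subseteq> U} > 0"
    and "A = a ` {1..}"
    and "\<And>p. H p = real (LEAST n. n \<ge> 1 \<and> p = a n) powr (1 / real CARD('n))"
  shows "optimal_regular_system N A H U"
proof -
  obtain c where "0 < c" and density: "\<And>g k. dyadic_cube g k \<subseteq> U \<Longrightarrow>
      ereal c < liminf (\<lambda>j. ereal (2 powr (- real CARD('n) * real j) * real (card (dyadicM a g k j))))"
    by (rule ereal_Inf_pos_lower_bound[OF assms(5)]) (rule that)
  have "infinite (a ` {1..})"
    by (rule dyadic_density_infinite_range[OF assms(2,3) \<open>0 < c\<close> density])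
  then have "optimal_system N A H U"
    unfolding assms(6) by (rule enumeration_optimal_system[OF _ assms(7)])
  moreover from this have "regular_system N A H U"
    unfolding regular_system_def optimal_system_def assms(6)
    using dyadic_density_regular[OF assms(1) \<open>0 < c\<close> density assms(7)] by (intro conjI) blast+
  ultimately show ?thesis unfolding optimal_regular_system_def ..
qed

end
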